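(* For all integers $d\ge 4$ and $\ell\ge 4$, the diameter of $CK(d,\ell)$ is at most $2\ell-2$.
   Context: Let $\Sigma=\{0,1,\dots,d\}$. The cyclic Kautz digraph $CK(d,\ell)$ has as vertices all sequences $a_1\ldots a_\ell\in\Sigma^\ell$ with $a_i\neq a_{i+1}$ for $1\le i\le \ell-1$ and $a_1\neq a_\ell$, with an arc from $a_1\ldots a_\ell$ to $b_1\ldots b_\ell$ iff both are vertices and $b_i=a_{i+1}$ for $1\le i\le\ell-1$. The diameter is the maximum over ordered pairs of vertices of the directed distance. *)

theory Defs
  imports Main "HOL-Library.Extended_Nat"
begin

text \<open>Vertices are sequences a_1 ... a_l (as lists of
  length l, indexed from 0) over the alphabet {0,...,d}, with consecutive entries
  distinct and first entry distinct from the last.\<close>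

definition ck_vertex :: "nat \<Rightarrow> nat \<Rightarrow> nat list \<Rightarrow> bool" where
  "ck_vertex d l xs \<longleftrightarrow>
     length xs = l \<and> (\<forall>i<l. xs ! i \<le> d) \<and>
     (\<forall>i. i + 1 < l \<longrightarrow> xs ! i \<noteq> xs ! (i + 1)) \<and>
     xs ! 0 \<noteq> xs ! (l - 1)"

definition ck_arcs :: "nat \<Rightarrow> nat \<Rightarrow> (nat list \<times> nat list) set" where
  "ck_arcs d l = {(xs, ys). ck_vertex d l xs \<and> ck_vertex d l ys \<and>
                    (\<forall>i. i + 1 < l \<longrightarrow> ys ! i = xs ! (i + 1))}"

definition ck_dist :: "nat \<Rightarrow> nat \<Rightarrow> nat list \<Rightarrow> nat list \<Rightarrow> enat" where
  "ck_dist d l u v =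
     (if \<exists>k. (u, v) \<in> ck_arcs d l ^^ k
      then enat (LEAST k. (u, v) \<in> ck_arcs d l ^^ k) else \<infinity>)"

definition ck_diameter :: "nat \<Rightarrow> nat \<Rightarrow> enat" where
  "ck_diameter d l = Sup {ck_dist d l u v | u v. ck_vertex d l u \<and> ck_vertex d l v}"

end

theory Submission
  imports Defs
begin

text \<open>A walk of length \<open>n\<close> in \<open>CK(d,l)\<close> is the same as a word of length \<open>l + n\<close> all of
  whose length-\<open>l\<close> windows are vertices, the walk reading the windows from left to right.
  To go from \<open>u\<close> to \<open>v\<close> we write \<open>u\<close>, then \<open>m\<close> bridging letters, then \<open>v\<close>, with
  \<open>m = l - 2\<close> if the last letter of \<open>u\<close> differs from the first of \<open>v\<close> and \<open>m = l - 3\<close>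
  otherwise; this choice makes the windows starting in \<open>u\<close> and ending in \<open>v\<close> have distinct
  first and last letters. Each bridging letter only has to avoid four letters (its predecessor and the
  letters at distance \<open>1\<close> and \<open>l - 1\<close> from it), so it can be chosen in \<open>{0..4}\<close>, which
  is where \<open>d \<ge> 4\<close> is used. The resulting walk has length \<open>l + m \<le> 2l - 2\<close>.\<close>

definition fresh_letter :: "nat set \<Rightarrow> nat" where
  "fresh_letter S = (LEAST c. c \<notin> S)"

lemma fresh_letter_notin: "finite S \<Longrightarrow> fresh_letter S \<notin> S"
  unfolding fresh_letter_def
  by (rule LeastI_ex) (use ex_new_if_finite[OF infinite_UNIV_nat] in blast)

lemma fresh_letter_le_card:
  assumes "finite S"
  shows "fresh_letter S \<le> card S"
proof -
  have "card S < card {0..card S}"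
    by simp
  then have "\<not> {0..card S} \<subseteq> S"
    using card_mono[OF assms] by (meson not_le)
  then obtain c where c: "c \<in> {0..card S}" "c \<notin> S"
    by blast
  then have "fresh_letter S \<le> c"
    unfolding fresh_letter_def by (simp add: Least_le)
  with c show ?thesis
    by simp
qed

lemma fresh_letter_insert4_le: "fresh_letter {a, b, c, e} \<le> 4"
proof -
  have "card {a, b, c, e} \<le> 4"
    by (simp add: card_insert_if)
  then show ?thesis
    using fresh_letter_le_card[of "{a, b, c, e}"] by simp
qed

definition ck_word :: "nat \<Rightarrow> nat \<Rightarrow> nat \<Rightarrow> (nat \<Rightarrow> nat) \<Rightarrow> bool" where
  "ck_word d l N W \<longleftrightarrow>
     (\<forall>j<N. W j \<le> d) \<and> (\<forall>j. j + 1 < N \<longrightarrow> W j \<noteq> W (j + 1)) \<and>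
     (\<forall>j. j + l - 1 < N \<longrightarrow> W j \<noteq> W (j + l - 1))"

lemma ck_word_window_vertex:
  assumes "ck_word d l N W" "1 \<le> l" "n + l \<le> N"
  shows "ck_vertex d l (map W [n..<n + l])"
  using assms unfolding ck_word_def ck_vertex_def
  by (auto simp: add.assoc simp del: upt_Suc)

lemma ck_word_walk:
  assumes W: "ck_word d l N W" and l: "1 \<le> l"
  shows "n + l \<le> N \<Longrightarrow> (map W [0..<l], map W [n..<n + l]) \<in> ck_arcs d l ^^ n"
proof (induction n)
  case 0
  then show ?case by simp
next
  case (Suc n)
  have "(map W [n..<n + l], map W [Suc n..<Suc n + l]) \<in> ck_arcs d l"
    unfolding ck_arcs_def
    using ck_word_window_vertex[OF W l, of n] ck_word_window_vertex[OF W l, of "Suc n"] Suc.prems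
    by (simp del: upt_Suc)
  with Suc show ?case by auto
qed

text \<open>The bridging letters \<open>p 1, \<dots>, p m\<close>, written after \<open>u\<close> at positions \<open>l, \<dots>, l + m - 1\<close>;
  \<open>p 0\<close> is the last letter of \<open>u\<close>.\<close>

primrec bridge :: "nat \<Rightarrow> nat list \<Rightarrow> nat list \<Rightarrow> nat \<Rightarrow> nat \<Rightarrow> nat" where
  "bridge l u v m 0 = u ! (l - 1)"
| "bridge l u v m (Suc i) =
     fresh_letter {bridge l u v m i, u ! (i + 1), v ! (l + i - 1 - m),
                   if Suc i = m then v ! 0 else bridge l u v m i}"

lemma bridge_Suc:
  "bridge l u v m (Suc i) \<noteq> bridge l u v m i"
  "bridge l u v m (Suc i) \<noteq> u ! (i + 1)"
  "bridge l u v m (Suc i) \<noteq> v ! (l + i - 1 - m)"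
  "Suc i = m \<Longrightarrow> bridge l u v m (Suc i) \<noteq> v ! 0"
  "bridge l u v m (Suc i) \<le> 4"
  using fresh_letter_notin[of "{bridge l u v m i, u ! (i + 1), v ! (l + i - 1 - m),
                   if Suc i = m then v ! 0 else bridge l u v m i}"]
    fresh_letter_insert4_le
  by auto

declare bridge.simps(2) [simp del]

definition bridge_word :: "nat \<Rightarrow> nat list \<Rightarrow> nat list \<Rightarrow> nat \<Rightarrow> nat \<Rightarrow> nat" where
  "bridge_word l u v m j =
     (if j < l then u ! j else if j < l + m then bridge l u v m (j - l + 1) else v ! (j - l - m))"

lemma bridge_word_prefix: "j < l \<Longrightarrow> bridge_word l u v m j = u ! j"
  and bridge_word_bridge:
    "l \<le> j \<Longrightarrow> j < l + m \<Longrightarrow> bridge_word l u v m j = bridge l u v m (Suc (j - l))"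
  and bridge_word_suffix: "l + m \<le> j \<Longrightarrow> bridge_word l u v m j = v ! (j - l - m)"
  unfolding bridge_word_def by simp_all

lemmas bridge_word_simps = bridge_word_prefix bridge_word_bridge bridge_word_suffix

context
  fixes d l m :: nat and u v :: "nat list"
  assumes d: "4 \<le> d" and u: "ck_vertex d l u" and v: "ck_vertex d l v"
    and m: "1 \<le> m" "m + 2 \<le> l"
    and overlap: "\<And>j. m + 1 \<le> j \<Longrightarrow> j \<le> l - 1 \<Longrightarrow> u ! j \<noteq> v ! (j - 1 - m)"
begin

private lemma bridge_word_le: "j < 2 * l + m \<Longrightarrow> bridge_word l u v m j \<le> d"
  using u v d bridge_Suc(5)[of l u v m "j - l"]
  by (cases "j < l"; cases "j < l + m") (auto simp: bridge_word_simps ck_vertex_def)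

private lemma bridge_word_consecutive_distinct:
  assumes j: "j + 1 < 2 * l + m"
  shows "bridge_word l u v m j \<noteq> bridge_word l u v m (j + 1)"
proof -
  consider "j + 1 < l" | "j + 1 = l" | "l \<le> j" "j + 1 < l + m" | "j + 1 = l + m" | "l + m \<le> j"
    using m by linarith
  then show ?thesis
  proof cases
    case 1
    then show ?thesis using u by (simp add: bridge_word_simps ck_vertex_def)
  next
    case 2
    then have "j = l - 1" "j < l" by simp_all
    with 2 m show ?thesis
      using bridge_Suc(1)[of l u v m 0] by (simp add: bridge_word_simps)
  next
    case 3
    then show ?thesis using bridge_Suc(1)[of l u v m "Suc (j - l)"]
      by (simp add: bridge_word_simps Suc_diff_le)
  next
    case 4
    then have "Suc (j - l) = m"
      using m by simp
    with 4 show ?thesis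
      using bridge_Suc(4)[of "j - l" m l u v] by (simp add: bridge_word_simps)
  next
    case 5
    then show ?thesis using v j by (simp add: bridge_word_simps Suc_diff_le ck_vertex_def)
  qed
qed

private lemma bridge_word_cyclic_distinct:
  assumes j: "j + l - 1 < 2 * l + m"
  shows "bridge_word l u v m j \<noteq> bridge_word l u v m (j + l - 1)"
proof -
  consider "j = 0" | "1 \<le> j" "j \<le> m" | "m + 1 \<le> j" "j \<le> l - 1" | "l \<le> j" "j < l + m"
    | "j = l + m"
    using j m by linarith
  then show ?thesis
  proof cases
    case 1
    then show ?thesis using u m by (simp add: bridge_word_simps ck_vertex_def)
  next
    case 2
    then show ?thesis
      using bridge_Suc(2)[of l u v m "j - 1"] m by (simp add: bridge_word_simps)
  next
    case 3
    then show ?thesis using overlap m by (simp add: bridge_word_simps)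
  next
    case 4
    then have "bridge_word l u v m (j + l - 1) = v ! (l + (j - l) - 1 - m)"
      using m by (simp add: bridge_word_suffix)
    with 4 show ?thesis
      using bridge_Suc(3)[of l u v m "j - l"] by (simp add: bridge_word_bridge)
  next
    case 5
    then show ?thesis using v m by (simp add: bridge_word_simps ck_vertex_def)
  qed
qed

lemma ck_arcs_pow_via_bridge: "(u, v) \<in> ck_arcs d l ^^ (l + m)"
proof -
  define W where "W = bridge_word l u v m"
  have "ck_word d l (2 * l + m) W"
    unfolding ck_word_def W_def
    using bridge_word_le bridge_word_consecutive_distinct bridge_word_cyclic_distinct by blast
  then have "(map W [0..<l], map W [l + m..<l + m + l]) \<in> ck_arcs d l ^^ (l + m)"
    using ck_word_walk[of d l _ W "l + m"] m by simp
  moreover have "length u = l" "length v = l"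
    using u v by (simp_all add: ck_vertex_def)
  then have "map W [0..<l] = u" "map W [l + m..<l + m + l] = v"
    unfolding W_def by (auto intro: nth_equalityI simp: bridge_word_simps)
  ultimately show ?thesis by simp
qed

end

lemma ck_walk_short:
  assumes d: "4 \<le> d" and l: "4 \<le> l" and u: "ck_vertex d l u" and v: "ck_vertex d l v"
  shows "\<exists>k \<le> 2 * l - 2. (u, v) \<in> ck_arcs d l ^^ k"
proof (cases "u ! (l - 1) = v ! 0")
  case False
  have "(u, v) \<in> ck_arcs d l ^^ (l + (l - 2))"
  proof (rule ck_arcs_pow_via_bridge[OF d u v])
    fix j assume "l - 2 + 1 \<le> j" "j \<le> l - 1"
    then have "j = l - 1" "j - 1 - (l - 2) = 0" using l by simp_all
    then show "u ! j \<noteq> v ! (j - 1 - (l - 2))" using False by simp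
  qed (use l in simp_all)
  then show ?thesis using l by (intro exI[of _ "l + (l - 2)"]) simp
next
  case True
  have "l - 2 + 1 < l" "l - 2 + 1 = l - 1" using l by simp_all
  then have u_last: "u ! (l - 2) \<noteq> u ! (l - 1)"
    using u unfolding ck_vertex_def by metis
  have v_first: "v ! 0 \<noteq> v ! 1"
    using v l unfolding ck_vertex_def by auto
  have "(u, v) \<in> ck_arcs d l ^^ (l + (l - 3))"
  proof (rule ck_arcs_pow_via_bridge[OF d u v])
    fix j assume "l - 3 + 1 \<le> j" "j \<le> l - 1"
    then consider "j = l - 2" "j - 1 - (l - 3) = 0" | "j = l - 1" "j - 1 - (l - 3) = 1"
      using l by linarith
    then show "u ! j \<noteq> v ! (j - 1 - (l - 3))"
      using True u_last v_first by cases simp_all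
  qed (use l in simp_all)
  then show ?thesis using l by (intro exI[of _ "l + (l - 3)"]) simp
qed

lemma ck_dist_le:
  assumes "(u, v) \<in> ck_arcs d l ^^ k"
  shows "ck_dist d l u v \<le> enat k"
proof -
  have "(LEAST k. (u, v) \<in> ck_arcs d l ^^ k) \<le> k"
    using assms by (rule Least_le)
  with assms show ?thesis
    unfolding ck_dist_def by auto
qed

theorem lemma8:
  fixes d l :: nat
  assumes "d \<ge> 4" and "l \<ge> 4"
  shows "ck_diameter d l \<le> enat (2 * l - 2)"
  unfolding ck_diameter_def
proof (rule Sup_least)
  fix x assume "x \<in> {ck_dist d l u v | u v. ck_vertex d l u \<and> ck_vertex d l v}"
  then obtain u v where x: "x = ck_dist d l u v" and uv: "ck_vertex d l u" "ck_vertex d l v"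
    by blast
  obtain k where k: "k \<le> 2 * l - 2" "(u, v) \<in> ck_arcs d l ^^ k"
    using ck_walk_short[OF assms uv] by blast
  have "x \<le> enat k"
    unfolding x using k(2) by (rule ck_dist_le)
  also have "\<dots> \<le> enat (2 * l - 2)"
    using k(1) by simp
  finally show "x \<le> enat (2 * l - 2)" .
qed

end
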